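(* Let $d,g\ge 1$ be integers and $n=dg$. In the network $\mathrm{POPS}(d,g)$, any permutation $\pi$ of $\{0,\dots,n-1\}$ can be routed using one slot when $d=1$ and $2\lceil d/g\rceil$ slots when $d>1$.
   Context: The network $\mathrm{POPS}(d,g)$ (Partitioned Optical Passive Stars network) has $n=dg$ processors indexed $0,\dots,n-1$; processor $i$ belongs to group $\mathrm{group}(i):=\lfloor i/d\rfloor\in\{0,\dots,g-1\}$, so each group has $d$ processors. For each pair of groups $a,b\in\{0,\dots,g-1\}$ there is a coupler $c(b,a)$ whose sources are the processors of group $a$ and whose destinations are the processors of group $b$ ($g^2$ couplers in total). Processor $i$ can transmit to the couplers $c(a,\mathrm{group}(i))$, $a=0,\dots,g-1$, and can receive from the couplers $c(\mathrm{group}(i),b)$, $b=0,\dots,g-1$. Computation proceeds in synchronous steps called slots: in one slot each processor, in parallel, performs local computation, sends one packet to any subset of its transmitters (couplers), and receives a packet from one of its receivers (obtaining the packet sent on that coupler in that slot); it is required that no two processors send a packet to the same coupler in the same slot. Processors may store packets in local memory between slots. Routing a permutation $\pi$ of $\{0,\dots,n-1\}$ means: initially processor $i$ holds a packet $p_i$ with destination $\pi(i)$, for each $i$, and at the end each packet $p_i$ must be at processor $\pi(i)$. *)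

theory Defs
  imports Complex_Main
begin

text \<open>Processors are 0..n-1 with n = d*g; packet p_i is
identified with the natural number i. A slot is a triple (pk, S, r):
processor i sends packet pk i to the couplers c(a, group i) for a in S i
(S i = {} means no transmission), and receives from coupler c(group i, r i).\<close>

type_synonym slot = "(nat \<Rightarrow> nat) \<times> (nat \<Rightarrow> nat set) \<times> (nat \<Rightarrow> nat)"

definition grp :: "nat \<Rightarrow> nat \<Rightarrow> nat" where
  "grp d i = i div d"

text \<open>Validity of a slot given current memories M (M i = set of packets stored at i).
The coupler c(a, grp i) is used by i iff a \<in> S i; two distinct processors use the same
coupler iff they are in the same group and share a target group.\<close>
definition valid_slot :: "nat \<Rightarrow> nat \<Rightarrow> (nat \<Rightarrow> nat set) \<Rightarrow> slot \<Rightarrow> bool" where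
  "valid_slot d g M s = (case s of (pk, S, r) \<Rightarrow>
     (\<forall>i < d*g. S i \<subseteq> {..<g} \<and> (S i \<noteq> {} \<longrightarrow> pk i \<in> M i) \<and> r i < g) \<and>
     (\<forall>i < d*g. \<forall>j < d*g. i \<noteq> j \<and> grp d i = grp d j \<longrightarrow> S i \<inter> S j = {}))"

definition step :: "nat \<Rightarrow> nat \<Rightarrow> (nat \<Rightarrow> nat set) \<Rightarrow> slot \<Rightarrow> (nat \<Rightarrow> nat set)" where
  "step d g M s = (case s of (pk, S, r) \<Rightarrow>
     (\<lambda>i. M i \<union> {pk j | j. j < d*g \<and> grp d j = r i \<and> grp d i \<in> S j}))"

fun valid_sched :: "nat \<Rightarrow> nat \<Rightarrow> (nat \<Rightarrow> nat set) \<Rightarrow> slot list \<Rightarrow> bool" where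
  "valid_sched d g M [] = True"
| "valid_sched d g M (s # ss) = (valid_slot d g M s \<and> valid_sched d g (step d g M s) ss)"

fun run :: "nat \<Rightarrow> nat \<Rightarrow> (nat \<Rightarrow> nat set) \<Rightarrow> slot list \<Rightarrow> (nat \<Rightarrow> nat set)" where
  "run d g M [] = M"
| "run d g M (s # ss) = run d g (step d g M s) ss"

definition routable_in :: "nat \<Rightarrow> nat \<Rightarrow> (nat \<Rightarrow> nat) \<Rightarrow> nat \<Rightarrow> bool" where
  "routable_in d g \<pi> t = (\<exists>ss. length ss = t \<and> valid_sched d g (\<lambda>i. {i}) ss \<and>
      (\<forall>i < d*g. i \<in> run d g (\<lambda>i. {i}) ss (\<pi> i)))"

end

theory Submission
  imports Defs
begin

(* The packets form a d-regular bipartite multigraph between source groups and destination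
   groups. By Hall's theorem it splits into d perfect matchings (Koenig); if d < g, one first
   pads it to a g-regular multigraph with 2g - d vertices per side and splits that into g
   perfect matchings, each of which then contains at most d packets. Colour the packets by
   these matchings. Packets of one colour c have distinct source groups and distinct
   destination groups, so in one slot they can be sent to distinct processors of group
   c mod g and in a second slot delivered from there; the g colours sharing c div g use
   disjoint couplers and share these two slots, which gives 2 ceil(d/g) slots. For d = 1
   every packet is sent directly on coupler c(pi i, i). *)

section \<open>Hall's marriage theorem\<close>

definition hall_condition :: "'i set \<Rightarrow> ('i \<Rightarrow> 'a set) \<Rightarrow> bool" where
  "hall_condition I A \<longleftrightarrow> (\<forall>J\<subseteq>I. card J \<le> card (\<Union>(A ` J)))"

lemma hall_conditionD: "hall_condition I A \<Longrightarrow> J \<subseteq> I \<Longrightarrow> card J \<le> card (\<Union>(A ` J))"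
  unfolding hall_condition_def by blast

lemma hall_condition_singleton_sets:
  assumes hall: "hall_condition I A" and small: "\<forall>i\<in>I. card (A i) \<le> 1"
  shows "\<exists>f. inj_on f I \<and> (\<forall>i\<in>I. f i \<in> A i)"
proof -
  have "card {i} \<le> card (\<Union>(A ` {i}))" if "i \<in> I" for i
    using hall_conditionD[OF hall, of "{i}"] that by simp
  then have "card (A i) = 1" if "i \<in> I" for i
    using small that by (simp add: le_antisym)
  then have "\<forall>i\<in>I. \<exists>x. A i = {x}" by (simp add: card_1_singleton_iff)
  then obtain a where a: "\<forall>i\<in>I. A i = {a i}" by (rule bchoice[THEN exE])
  have "inj_on a I"
  proof (rule inj_onI, rule ccontr)
    fix i j assume ij: "i \<in> I" "j \<in> I" "a i = a j" "i \<noteq> j"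
    have "card {i, j} \<le> card (\<Union>(A ` {i, j}))"
      using ij by (intro hall_conditionD[OF hall]) simp
    then show False using ij a by simp
  qed
  then show ?thesis using a by blast
qed

lemma hall_violator_after_removal:
  assumes hall: "hall_condition I A" and "finite I"
    and J: "J \<subseteq> I" "card (\<Union>((A(i0 := A i0 - {x})) ` J)) < card J"
  obtains K where "K \<subseteq> I - {i0}" "card (\<Union>(A ` K) \<union> (A i0 - {x})) \<le> card K"
proof -
  have "i0 \<in> J"
  proof (rule ccontr)
    assume "i0 \<notin> J"
    then have "(A(i0 := A i0 - {x})) ` J = A ` J" by auto
    then show False using hall J unfolding hall_condition_def by (metis not_le)
  qed
  define K where "K = J - {i0}"
  have "finite J" using J(1) \<open>finite I\<close> finite_subset by blast
  then have "card J = Suc (card K)"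
    using \<open>i0 \<in> J\<close> K_def card_Suc_Diff1 by metis
  moreover have "\<Union>((A(i0 := A i0 - {x})) ` J) = \<Union>(A ` K) \<union> (A i0 - {x})"
    using \<open>i0 \<in> J\<close> K_def by auto
  ultimately show thesis using J by (intro that[of K]) (auto simp: K_def)
qed

text \<open>Rado's lemma: one of two elements of the same set can be deleted without breaking
  Hall's condition, by submodularity of the cardinality of unions.\<close>
lemma hall_condition_remove_element:
  assumes fin: "finite I" "\<forall>i\<in>I. finite (A i)" and hall: "hall_condition I A"
    and x12: "i0 \<in> I" "x1 \<in> A i0" "x2 \<in> A i0" "x1 \<noteq> x2"
  shows "\<exists>x\<in>{x1, x2}. hall_condition I (A(i0 := A i0 - {x}))"
proof (rule ccontr)
  assume "\<not> ?thesis"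
  then obtain J1 J2 where J1: "J1 \<subseteq> I" "card (\<Union>((A(i0 := A i0 - {x1})) ` J1)) < card J1"
    and J2: "J2 \<subseteq> I" "card (\<Union>((A(i0 := A i0 - {x2})) ` J2)) < card J2"
    unfolding hall_condition_def by (meson not_le insertI1 insertI2 singletonI)
  obtain K1 where K1: "K1 \<subseteq> I - {i0}" "card (\<Union>(A ` K1) \<union> (A i0 - {x1})) \<le> card K1"
    using hall_violator_after_removal[OF hall fin(1) J1] .
  obtain K2 where K2: "K2 \<subseteq> I - {i0}" "card (\<Union>(A ` K2) \<union> (A i0 - {x2})) \<le> card K2"
    using hall_violator_after_removal[OF hall fin(1) J2] .
  define U1 where "U1 = \<Union>(A ` K1) \<union> (A i0 - {x1})"
  define U2 where "U2 = \<Union>(A ` K2) \<union> (A i0 - {x2})"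
  have fK: "finite K1" "finite K2" using K1 K2 fin(1) finite_subset by blast+
  have fU: "finite U1" "finite U2" unfolding U1_def U2_def using fK K1 K2 fin x12 by auto
  have "i0 \<notin> K1 \<union> K2" using K1 K2 by blast
  then have "Suc (card (K1 \<union> K2)) = card (insert i0 (K1 \<union> K2))"
    using fK by simp
  also have "\<dots> \<le> card (\<Union>(A ` insert i0 (K1 \<union> K2)))"
    using K1 K2 x12 by (intro hall_conditionD[OF hall]) blast
  also have "\<dots> \<le> card (U1 \<union> U2)"
    using fU x12 unfolding U1_def U2_def by (intro card_mono) auto
  finally have union: "Suc (card (K1 \<union> K2)) \<le> card (U1 \<union> U2)" .
  have "card (K1 \<inter> K2) \<le> card (\<Union>(A ` (K1 \<inter> K2)))"
    using K1 by (intro hall_conditionD[OF hall]) blast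
  also have "\<dots> \<le> card (U1 \<inter> U2)"
    using fU unfolding U1_def U2_def by (intro card_mono) auto
  finally have inter: "card (K1 \<inter> K2) \<le> card (U1 \<inter> U2)" .
  have "card U1 + card U2 = card (U1 \<union> U2) + card (U1 \<inter> U2)"
    "card K1 + card K2 = card (K1 \<union> K2) + card (K1 \<inter> K2)"
    using card_Un_Int fU fK by blast+
  then show False using union inter K1(2) K2(2) unfolding U1_def U2_def by linarith
qed

theorem hall_marriage:
  assumes "finite I" "\<forall>i\<in>I. finite (A i)" "hall_condition I A"
  shows "\<exists>f. inj_on f I \<and> (\<forall>i\<in>I. f i \<in> A i)"
  using assms(2,3)
proof (induction "\<Sum>i\<in>I. card (A i)" arbitrary: A rule: less_induct)
  case less
  show ?case
  proof (cases "\<forall>i\<in>I. card (A i) \<le> 1")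
    case True
    then show ?thesis using hall_condition_singleton_sets less.prems(2) by blast
  next
    case False
    then obtain i0 where i0: "i0 \<in> I" "2 \<le> card (A i0)" by force
    then obtain x1 x2 where x12: "x1 \<in> A i0" "x2 \<in> A i0" "x1 \<noteq> x2"
      using less.prems(1) card_le_Suc0_iff_eq[of "A i0"] by force
    obtain x where x: "hall_condition I (A(i0 := A i0 - {x}))" "x \<in> A i0"
      using hall_condition_remove_element[OF assms(1) less.prems i0(1) x12] x12 by blast
    let ?B = "A(i0 := A i0 - {x})"
    have "(\<Sum>i\<in>I. card (?B i)) < (\<Sum>i\<in>I. card (A i))"
    proof (rule sum_strict_mono_ex1[OF assms(1)])
      show "\<forall>i\<in>I. card (?B i) \<le> card (A i)"
        using less.prems(1) by (simp add: card_mono)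
      show "\<exists>i\<in>I. card (?B i) < card (A i)"
        using i0 x less.prems(1) by (intro bexI[of _ i0]) (auto intro: psubset_card_mono)
    qed
    moreover have "\<forall>i\<in>I. finite (?B i)" using less.prems(1) by simp
    ultimately obtain f where "inj_on f I" "\<forall>i\<in>I. f i \<in> ?B i"
      using less.hyps x(1) by blast
    then show ?thesis by (metis Diff_iff fun_upd_apply)
  qed
qed

section \<open>Perfect matchings in regular bipartite multigraphs\<close>

text \<open>Edges are abstract elements joining \<open>u e\<close> to \<open>v e\<close>, so parallel edges are allowed.\<close>
definition regular_bipartite ::
    "'e set \<Rightarrow> ('e \<Rightarrow> 'a) \<Rightarrow> ('e \<Rightarrow> 'b) \<Rightarrow> 'a set \<Rightarrow> 'b set \<Rightarrow> nat \<Rightarrow> bool" where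
  "regular_bipartite E u v L R k \<longleftrightarrow> finite E \<and> finite L \<and> finite R \<and>
     (\<forall>e\<in>E. u e \<in> L \<and> v e \<in> R) \<and>
     (\<forall>x\<in>L. card {e\<in>E. u e = x} = k) \<and> (\<forall>y\<in>R. card {e\<in>E. v e = y} = k)"

lemma regular_bipartite_swap:
  "regular_bipartite E u v L R k \<Longrightarrow> regular_bipartite E v u R L k"
  unfolding regular_bipartite_def by blast

lemma card_edges_into:
  assumes "finite E" "finite J" "\<forall>x\<in>J. card {e\<in>E. u e = x} = k"
  shows "card {e\<in>E. u e \<in> J} = k * card J"
proof -
  have "{e\<in>E. u e \<in> J} = (\<Union>x\<in>J. {e\<in>E. u e = x})" by auto
  also have "card \<dots> = (\<Sum>x\<in>J. card {e\<in>E. u e = x})"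
    using assms(1,2) by (intro card_UN_disjoint) auto
  finally show ?thesis using assms(3) by simp
qed

lemma regular_bipartite_card_edges:
  assumes "regular_bipartite E u v L R k"
  shows "card E = k * card L"
proof -
  have "{e\<in>E. u e \<in> L} = E" using assms unfolding regular_bipartite_def by blast
  then show ?thesis using card_edges_into[of E L u k] assms
    unfolding regular_bipartite_def by simp
qed

lemma regular_bipartite_hall_condition:
  assumes reg: "regular_bipartite E u v L R k" and "0 < k"
  shows "hall_condition L (\<lambda>x. v ` {e\<in>E. u e = x})"
  unfolding hall_condition_def
proof (intro allI impI)
  fix J assume J: "J \<subseteq> L"
  let ?N = "\<Union>x\<in>J. v ` {e\<in>E. u e = x}"
  have fin: "finite E" "finite J" "finite ?N"
    using reg J finite_subset unfolding regular_bipartite_def by fastforce+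
  have "\<forall>x\<in>J. card {e\<in>E. u e = x} = k"
    using reg J unfolding regular_bipartite_def by blast
  then have "k * card J = card {e\<in>E. u e \<in> J}"
    using card_edges_into[of E J u k] fin by simp
  also have "\<dots> \<le> card {e\<in>E. v e \<in> ?N}"
    using fin by (intro card_mono) auto
  also have "\<dots> = k * card ?N"
    using card_edges_into[of E ?N v k] fin reg unfolding regular_bipartite_def by blast
  finally show "card J \<le> card ?N" using \<open>0 < k\<close> by simp
qed

lemma regular_bipartite_perfect_matching:
  assumes reg: "regular_bipartite E u v L R k" and "0 < k"
  obtains M where "M \<subseteq> E" "bij_betw u M L" "bij_betw v M R"
proof -
  have fin: "finite E" "finite L" "finite R" and uv: "\<forall>e\<in>E. u e \<in> L \<and> v e \<in> R"
    using reg unfolding regular_bipartite_def by blast+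
  obtain f where f: "inj_on f L" "\<forall>x\<in>L. f x \<in> v ` {e\<in>E. u e = x}"
    using hall_marriage[OF fin(2) _ regular_bipartite_hall_condition[OF assms]] fin(1) by auto
  then have "\<forall>x\<in>L. \<exists>e. e \<in> E \<and> u e = x \<and> v e = f x" by fastforce
  then obtain m where m: "\<forall>x\<in>L. m x \<in> E \<and> u (m x) = x \<and> v (m x) = f x"
    by (rule bchoice[THEN exE])
  have "card L = card R"
    using regular_bipartite_card_edges[OF reg] regular_bipartite_card_edges[OF regular_bipartite_swap[OF reg]]
      \<open>0 < k\<close> by simp
  moreover have "f ` L \<subseteq> R" using f uv by fastforce
  ultimately have "f ` L = R" using fin f(1) by (metis card_image card_subset_eq)
  show thesis
  proof
    show "m ` L \<subseteq> E" using m by blast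
    show "bij_betw u (m ` L) L"
      using m by (intro bij_betw_byWitness[where f' = m]) auto
    have "inj_on v (m ` L)"
    proof (rule inj_onI)
      fix e e' assume "e \<in> m ` L" "e' \<in> m ` L" "v e = v e'"
      then obtain x x' where "x \<in> L" "x' \<in> L" "e = m x" "e' = m x'" "f x = f x'"
        using m by auto
      then show "e = e'" using inj_onD[OF f(1)] by metis
    qed
    moreover have "v ` m ` L = R" using m \<open>f ` L = R\<close> by (auto simp: image_image)
    ultimately show "bij_betw v (m ` L) R" unfolding bij_betw_def by blast
  qed
qed

lemma card_fibre_remove_transversal:
  assumes "finite E" "M \<subseteq> E" "bij_betw u M L" "x \<in> L"
  shows "card {e\<in>E - M. u e = x} = card {e\<in>E. u e = x} - 1"
proof -
  obtain e0 where e0: "e0 \<in> M" "u e0 = x" using assms(3,4) by (metis bij_betw_imp_surj_on imageE)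
  have "{e\<in>E - M. u e = x} = {e\<in>E. u e = x} - {e0}"
    using e0 assms(2,3) by (auto simp: bij_betw_def inj_on_def)
  moreover have "e0 \<in> {e\<in>E. u e = x}" using e0 assms(2) by blast
  ultimately show ?thesis using assms(1) by (simp add: card_Diff_singleton)
qed

lemma regular_bipartite_remove_perfect_matching:
  assumes "regular_bipartite E u v L R (Suc k)" "M \<subseteq> E" "bij_betw u M L" "bij_betw v M R"
  shows "regular_bipartite (E - M) u v L R k"
  using assms card_fibre_remove_transversal[of E M u L] card_fibre_remove_transversal[of E M v R]
  unfolding regular_bipartite_def by auto

theorem regular_bipartite_perfect_matching_decomposition:
  assumes "regular_bipartite E u v L R k"
  shows "\<exists>col. (\<forall>e\<in>E. col e < k) \<and>
    (\<forall>c<k. bij_betw u {e\<in>E. col e = c} L \<and> bij_betw v {e\<in>E. col e = c} R)"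
  using assms
proof (induction k arbitrary: E)
  case 0
  then have "E = {}"
    using regular_bipartite_card_edges[OF 0] unfolding regular_bipartite_def by simp
  then show ?case by simp
next
  case (Suc k)
  obtain M where M: "M \<subseteq> E" "bij_betw u M L" "bij_betw v M R"
    using regular_bipartite_perfect_matching[OF Suc.prems] by blast
  obtain col where col: "\<forall>e\<in>E - M. col e < k"
    "\<forall>c<k. bij_betw u {e\<in>E - M. col e = c} L \<and> bij_betw v {e\<in>E - M. col e = c} R"
    using Suc.IH[OF regular_bipartite_remove_perfect_matching[OF Suc.prems M]] by blast
  define col' where "col' e = (if e \<in> M then k else col e)" for e
  have "{e\<in>E. col' e = c} = {e\<in>E - M. col e = c}" if "c < k" for c
    using that col(1) unfolding col'_def by auto
  moreover have "{e\<in>E. col' e = k} = M"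
    using col(1) M(1) unfolding col'_def by auto
  ultimately show ?case using col M
    by (intro exI[of _ col']) (auto simp: col'_def less_Suc_eq)
qed

section \<open>Colouring the packets\<close>

lemma grp_less: "p < d * g \<Longrightarrow> grp d p < g"
  unfolding grp_def by (simp add: less_mult_imp_div_less mult.commute)

lemma card_group:
  assumes "0 < d" "a < g"
  shows "card {p\<in>{..<d*g}. grp d p = a} = d"
proof -
  have "grp d p = a \<longleftrightarrow> a * d \<le> p \<and> p < Suc a * d" for p
    using less_eq_div_iff_mult_less_eq[OF assms(1), of a p]
      div_less_iff_less_mult[OF assms(1), of p "Suc a"] unfolding grp_def by linarith
  moreover have "Suc a * d \<le> d * g"
    using mult_le_mono1[of "Suc a" g d] assms(2) by (simp add: mult.commute)
  ultimately have "{p\<in>{..<d*g}. grp d p = a} = {a * d..<Suc a * d}"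
    by (intro set_eqI) (simp, linarith)
  then show ?thesis by simp
qed

lemma card_destination_group:
  assumes "0 < d" "b < g" "bij_betw \<pi> {..<d*g} {..<d*g}"
  shows "card {p\<in>{..<d*g}. grp d (\<pi> p) = b} = d"
proof -
  have "bij_betw \<pi> {p\<in>{..<d*g}. grp d (\<pi> p) = b} {q\<in>{..<d*g}. grp d q = b}"
    using assms(3) by (auto simp: bij_betw_def inj_on_def)
  then show ?thesis using card_group[OF assms(1,2)] by (simp add: bij_betw_same_card)
qed

lemma regular_bipartite_packets:
  assumes "0 < d" "bij_betw \<pi> {..<d*g} {..<d*g}"
  shows "regular_bipartite {..<d*g} (grp d) (\<lambda>p. grp d (\<pi> p)) {..<g} {..<g} d"
  unfolding regular_bipartite_def
proof (intro conjI ballI)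
  show "grp d p \<in> {..<g}" "grp d (\<pi> p) \<in> {..<g}" if "p \<in> {..<d*g}" for p
    using that grp_less bij_betw_apply[OF assms(2)] by auto
qed (use assms card_group card_destination_group in auto)

definition admissible_colouring ::
    "nat \<Rightarrow> nat \<Rightarrow> (nat \<Rightarrow> nat) \<Rightarrow> (nat \<Rightarrow> nat) \<Rightarrow> nat \<Rightarrow> bool" where
  "admissible_colouring d g \<pi> col m \<longleftrightarrow> (\<forall>p<d*g. col p < m) \<and>
     (\<forall>c. inj_on (grp d) {p. p < d*g \<and> col p = c}) \<and>
     (\<forall>c. inj_on (\<lambda>p. grp d (\<pi> p)) {p. p < d*g \<and> col p = c}) \<and>
     (\<forall>c. card {p. p < d*g \<and> col p = c} \<le> d)"

lemma admissible_colouring_mono: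
  "admissible_colouring d g \<pi> col m \<Longrightarrow> m \<le> m' \<Longrightarrow> admissible_colouring d g \<pi> col m'"
  unfolding admissible_colouring_def by (meson less_le_trans)

lemma admissible_colouring_few_groups:
  assumes "0 < d" "g \<le> d" "bij_betw \<pi> {..<d*g} {..<d*g}"
  shows "\<exists>col. admissible_colouring d g \<pi> col d"
proof -
  obtain col where col: "\<forall>p<d*g. col p < d"
    "\<forall>c<d. bij_betw (grp d) {p\<in>{..<d*g}. col p = c} {..<g} \<and>
       bij_betw (\<lambda>p. grp d (\<pi> p)) {p\<in>{..<d*g}. col p = c} {..<g}"
    using regular_bipartite_perfect_matching_decomposition[OF regular_bipartite_packets[OF assms(1,3)]]
    by auto
  have "inj_on (grp d) {p. p < d*g \<and> col p = c} \<and>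
    inj_on (\<lambda>p. grp d (\<pi> p)) {p. p < d*g \<and> col p = c} \<and> card {p. p < d*g \<and> col p = c} \<le> d" for c
  proof (cases "c < d")
    case True
    then show ?thesis using col(2) assms(2) bij_betw_same_card[of "grp d"]
      by (auto simp: bij_betw_def)
  next
    case False
    then have "{p. p < d*g \<and> col p = c} = {}" using col(1) by auto
    then show ?thesis by (simp only: inj_on_empty card.empty) simp
  qed
  then show ?thesis using col(1) unfolding admissible_colouring_def by blast
qed

lemma card_preimage_bij_betw:
  assumes "bij_betw f A B" "S \<subseteq> B"
  shows "card {a\<in>A. f a \<in> S} = card S"
proof -
  have "f ` {a\<in>A. f a \<in> S} = S"
    using assms by (auto simp: bij_betw_def)
  then have "bij_betw f {a\<in>A. f a \<in> S} S"
    using assms(1) by (auto intro: bij_betw_subset)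
  then show ?thesis by (rule bij_betw_same_card)
qed

lemma card_fibre_Plus:
  assumes "finite A" "finite B"
  shows "card {e \<in> Inl ` A \<union> Inr ` B. case_sum f h e = x} = card {a\<in>A. f a = x} + card {b\<in>B. h b = x}"
proof -
  have "{e \<in> Inl ` A \<union> Inr ` B. case_sum f h e = x} = Inl ` {a\<in>A. f a = x} \<union> Inr ` {b\<in>B. h b = x}"
    by auto
  moreover have "card (Inl ` {a\<in>A. f a = x} \<union> Inr ` {b\<in>B. h b = x}) =
      card {a\<in>A. f a = x} + card {b\<in>B. h b = x}"
    using assms by (subst card_Un_disjoint) (auto simp: card_image)
  ultimately show ?thesis by simp
qed

text \<open>Joining each of \<open>g - d\<close> new vertices on either side to all \<open>g\<close> old vertices on the
  other side raises all degrees of the packet multigraph from \<open>d\<close> to \<open>g\<close>.\<close>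
definition padding_edges :: "nat \<Rightarrow> nat \<Rightarrow> (nat \<times> nat) set" where
  "padding_edges d g = {..<g} \<times> {g..<2*g - d} \<union> {g..<2*g - d} \<times> {..<g}"

lemma card_padding_edges_fibre:
  assumes "d \<le> g" "x < 2*g - d"
  shows "card {z\<in>padding_edges d g. fst z = x} = (if x < g then g - d else g)"
    and "card {z\<in>padding_edges d g. snd z = x} = (if x < g then g - d else g)"
proof -
  have "{z\<in>padding_edges d g. fst z = x} = {x} \<times> (if x < g then {g..<2*g - d} else {..<g})"
    "{z\<in>padding_edges d g. snd z = x} = (if x < g then {g..<2*g - d} else {..<g}) \<times> {x}"
    using assms unfolding padding_edges_def by auto
  then show "card {z\<in>padding_edges d g. fst z = x} = (if x < g then g - d else g)"
    and "card {z\<in>padding_edges d g. snd z = x} = (if x < g then g - d else g)"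
    by (simp_all add: card_cartesian_product)
qed

lemma regular_bipartite_padded_packets:
  assumes "0 < d" "d \<le> g" "bij_betw \<pi> {..<d*g} {..<d*g}"
  shows "regular_bipartite (Inl ` {..<d*g} \<union> Inr ` padding_edges d g)
    (case_sum (grp d) fst) (case_sum (\<lambda>p. grp d (\<pi> p)) snd) {..<2*g - d} {..<2*g - d} g"
proof -
  have reg: "regular_bipartite {..<d*g} (grp d) (\<lambda>p. grp d (\<pi> p)) {..<g} {..<g} d"
    by (rule regular_bipartite_packets[OF assms(1,3)])
  have fin: "finite (padding_edges d g)" unfolding padding_edges_def by simp
  have packets: "card {p\<in>{..<d*g}. grp d p = x} = (if x < g then d else 0)"
    "card {p\<in>{..<d*g}. grp d (\<pi> p) = x} = (if x < g then d else 0)" for x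
    using reg unfolding regular_bipartite_def by auto
  show ?thesis
    unfolding regular_bipartite_def
  proof (intro conjI ballI)
    show "finite (Inl ` {..<d*g} \<union> Inr ` padding_edges d g)" using fin by simp
    show "case_sum (grp d) fst e \<in> {..<2*g - d}" "case_sum (\<lambda>p. grp d (\<pi> p)) snd e \<in> {..<2*g - d}"
      if "e \<in> Inl ` {..<d*g} \<union> Inr ` padding_edges d g" for e
      using that grp_less[of _ d g] bij_betw_apply[OF assms(3)] assms(2)
      unfolding padding_edges_def by fastforce+
    fix x assume x: "x \<in> {..<2*g - d}"
    have "card {e \<in> Inl ` {..<d*g} \<union> Inr ` padding_edges d g. case_sum (grp d) fst e = x} =
        card {p\<in>{..<d*g}. grp d p = x} + card {z\<in>padding_edges d g. fst z = x}"
      using fin by (intro card_fibre_Plus) simp_all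
    then show "card {e \<in> Inl ` {..<d*g} \<union> Inr ` padding_edges d g. case_sum (grp d) fst e = x} = g"
      using x assms(2) packets card_padding_edges_fibre[OF assms(2)] by simp
    have "card {e \<in> Inl ` {..<d*g} \<union> Inr ` padding_edges d g. case_sum (\<lambda>p. grp d (\<pi> p)) snd e = x} =
        card {p\<in>{..<d*g}. grp d (\<pi> p) = x} + card {z\<in>padding_edges d g. snd z = x}"
      using fin by (intro card_fibre_Plus) simp_all
    then show "card {e \<in> Inl ` {..<d*g} \<union> Inr ` padding_edges d g. case_sum (\<lambda>p. grp d (\<pi> p)) snd e = x} = g"
      using x assms(2) packets card_padding_edges_fibre[OF assms(2)] by simp
  qed simp_all
qed

lemma padding_edge_from_new_vertex: "z \<in> padding_edges d g \<Longrightarrow> g \<le> fst z \<Longrightarrow> snd z < g"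
  unfolding padding_edges_def by auto

lemma inj_on_Inl_preimage: "inj_on (case_sum f h) C \<Longrightarrow> inj_on f {x. Inl x \<in> C}"
  unfolding inj_on_def by fastforce

lemma card_packets_of_padded_perfect_matching:
  assumes "d \<le> g" "bij_betw \<pi> {..<d*g} {..<d*g}"
    and C: "C \<subseteq> Inl ` {..<d*g} \<union> Inr ` padding_edges d g"
    and bij_u: "bij_betw (case_sum (grp d) fst) C {..<2*g - d}"
    and bij_v: "bij_betw (case_sum (\<lambda>p. grp d (\<pi> p)) snd) C {..<2*g - d}"
  shows "card {p. Inl p \<in> C} \<le> d"
proof -
  let ?u = "case_sum (grp d) fst" and ?v = "case_sum (\<lambda>p. grp d (\<pi> p)) snd"
  let ?P = "{p. Inl p \<in> C}"
  text \<open>The \<open>g - d\<close> padding vertices on the left are matched into the old vertices on the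
    right, which leaves at most \<open>d\<close> of those for packets.\<close>
  define H where "H = {e\<in>C. ?u e \<in> {g..<2*g - d}}"
  have packet_grp_less: "grp d p < g" "grp d (\<pi> p) < g" if "p \<in> ?P" for p
    using that C grp_less bij_betw_apply[OF assms(2)] by auto
  have "finite C" using C finite_subset unfolding padding_edges_def by fastforce
  moreover have "Inl ` ?P \<union> H \<subseteq> {e\<in>C. ?v e \<in> {..<g}}"
  proof
    fix e assume e: "e \<in> Inl ` ?P \<union> H"
    then have "e \<in> C" unfolding H_def by blast
    moreover have "?v e < g"
    proof (cases e)
      case (Inl p)
      then show ?thesis using \<open>e \<in> C\<close> packet_grp_less(2) by simp
    next
      case (Inr z)
      then have "z \<in> padding_edges d g" "g \<le> fst z"
        using e C unfolding H_def by auto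
      then show ?thesis using Inr padding_edge_from_new_vertex by simp
    qed
    ultimately show "e \<in> {e\<in>C. ?v e \<in> {..<g}}" by simp
  qed
  ultimately have "card (Inl ` ?P \<union> H) \<le> card {e\<in>C. ?v e \<in> {..<g}}"
    by (intro card_mono) simp_all
  also have "\<dots> = g"
    using card_preimage_bij_betw[OF bij_v, of "{..<g}"] assms(1) by simp
  finally have "card (Inl ` ?P \<union> H) \<le> g" .
  moreover have "card H = card {g..<2*g - d}"
    unfolding H_def by (rule card_preimage_bij_betw[OF bij_u]) auto
  moreover have "Inl ` ?P \<inter> H = {}"
    using packet_grp_less unfolding H_def by (auto simp: not_le[symmetric])
  moreover have "finite H" "finite ?P"
    using \<open>finite C\<close> finite_vimageI[of C Inl] unfolding H_def vimage_def by auto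
  ultimately show ?thesis
    by (simp add: card_Un_disjoint card_image)
qed

lemma admissible_colouring_many_groups:
  assumes "0 < d" "d < g" "bij_betw \<pi> {..<d*g} {..<d*g}"
  shows "\<exists>col. admissible_colouring d g \<pi> col g"
proof -
  define E :: "(nat + nat \<times> nat) set" where "E = Inl ` {..<d*g} \<union> Inr ` padding_edges d g"
  obtain col where col: "\<forall>e\<in>E. col e < g"
    "\<forall>c<g. bij_betw (case_sum (grp d) fst) {e\<in>E. col e = c} {..<2*g - d} \<and>
      bij_betw (case_sum (\<lambda>p. grp d (\<pi> p)) snd) {e\<in>E. col e = c} {..<2*g - d}"
    using regular_bipartite_perfect_matching_decomposition[OF
        regular_bipartite_padded_packets[OF assms(1) less_imp_le[OF assms(2)] assms(3)]]
    unfolding E_def by blast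
  have P: "{p. p < d*g \<and> col (Inl p) = c} = {p. Inl p \<in> {e\<in>E. col e = c}}" for c
    unfolding E_def by auto
  have "inj_on (grp d) {p. Inl p \<in> {e\<in>E. col e = c}} \<and>
      inj_on (\<lambda>p. grp d (\<pi> p)) {p. Inl p \<in> {e\<in>E. col e = c}} \<and>
      card {p. Inl p \<in> {e\<in>E. col e = c}} \<le> d" for c
  proof (cases "c < g")
    case True
    have C: "{e\<in>E. col e = c} \<subseteq> Inl ` {..<d*g} \<union> Inr ` padding_edges d g"
      unfolding E_def by blast
    have u: "bij_betw (case_sum (grp d) fst) {e\<in>E. col e = c} {..<2*g - d}"
      and v: "bij_betw (case_sum (\<lambda>p. grp d (\<pi> p)) snd) {e\<in>E. col e = c} {..<2*g - d}"
      using col(2) True by blast+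
    show ?thesis
      using card_packets_of_padded_perfect_matching[OF less_imp_le[OF assms(2)] assms(3) C u v]
        inj_on_Inl_preimage[OF bij_betw_imp_inj_on[OF u]]
        inj_on_Inl_preimage[OF bij_betw_imp_inj_on[OF v]] by simp
  next
    case False
    then have "{p. Inl p \<in> {e\<in>E. col e = c}} = {}" using col(1) by auto
    then show ?thesis by (simp only: inj_on_empty card.empty) simp
  qed
  moreover have "\<forall>p<d*g. col (Inl p) < g" using col(1) unfolding E_def by auto
  ultimately have "admissible_colouring d g \<pi> (\<lambda>p. col (Inl p)) g"
    unfolding admissible_colouring_def P by blast
  then show ?thesis by blast
qed

lemma admissible_colouring_exists:
  assumes "0 < d" "0 < k" "d \<le> g * k" "bij_betw \<pi> {..<d*g} {..<d*g}"
  shows "\<exists>col. admissible_colouring d g \<pi> col (g * k)"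
proof (cases "g \<le> d")
  case True
  then show ?thesis
    using admissible_colouring_few_groups[OF assms(1) True assms(4)] admissible_colouring_mono assms(3)
    by blast
next
  case False
  moreover have "g \<le> g * k" using assms(2) by simp
  ultimately show ?thesis
    using admissible_colouring_many_groups[OF assms(1) _ assms(4)] admissible_colouring_mono
    by (meson not_le)
qed

section \<open>Routing one batch of colours in two slots\<close>

lemma step_mono: "M i \<subseteq> step d g M s i"
  by (cases s) (auto simp: step_def)

lemma run_mono: "M i \<subseteq> run d g M ss i"
proof (induction ss arbitrary: M)
  case (Cons s ss)
  show ?case using order_trans[OF step_mono Cons.IH] by simp
qed simp

lemma step_receives:
  assumes "j < d*g" "grp d j = r i" "grp d i \<in> S j"
  shows "pk j \<in> step d g M (pk, S, r) i"
  using assms unfolding step_def by auto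

locale relay_routing =
  fixes d g k :: nat and \<pi> col :: "nat \<Rightarrow> nat"
  assumes d_pos: "0 < d" and g_pos: "0 < g"
    and bij: "bij_betw \<pi> {..<d*g} {..<d*g}"
    and admissible: "admissible_colouring d g \<pi> col (g * k)"
begin

definition rank :: "nat \<Rightarrow> nat" where
  "rank p = card {q. q < d*g \<and> col q = col p \<and> q < p}"

definition relay :: "nat \<Rightarrow> nat" where
  "relay p = col p mod g * d + rank p"

definition batch :: "nat \<Rightarrow> nat set" where
  "batch r = {p. p < d*g \<and> col p div g = r}"

definition relayed :: "nat \<Rightarrow> nat \<Rightarrow> nat" where
  "relayed r = inv_into (batch r) relay"

definition origin :: "nat \<Rightarrow> nat" where
  "origin = inv_into {..<d*g} \<pi>"

definition relay_slot :: "nat \<Rightarrow> slot" where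
  "relay_slot r = ((\<lambda>i. i), (\<lambda>i. if i \<in> batch r then {col i mod g} else {}),
     (\<lambda>j. if j \<in> relay ` batch r then grp d (relayed r j) else 0))"

definition delivery_slot :: "nat \<Rightarrow> slot" where
  "delivery_slot r = (relayed r, (\<lambda>j. if j \<in> relay ` batch r then {grp d (\<pi> (relayed r j))} else {}),
     (\<lambda>q. col (origin q) mod g))"

lemma card_colour_class: "card {p. p < d*g \<and> col p = c} \<le> d"
  using admissible unfolding admissible_colouring_def by blast

lemma same_colour_source_group: "p < d*g \<Longrightarrow> q < d*g \<Longrightarrow> col p = col q \<Longrightarrow> grp d p = grp d q \<Longrightarrow> p = q"
  using admissible unfolding admissible_colouring_def inj_on_def by blast

lemma same_colour_destination_group:
  "p < d*g \<Longrightarrow> q < d*g \<Longrightarrow> col p = col q \<Longrightarrow> grp d (\<pi> p) = grp d (\<pi> q) \<Longrightarrow> p = q"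
  using admissible unfolding admissible_colouring_def inj_on_def by blast

lemma rank_less: "p < d*g \<Longrightarrow> rank p < d"
proof -
  assume "p < d*g"
  then have "{q. q < d*g \<and> col q = col p \<and> q < p} \<subset> {q. q < d*g \<and> col q = col p}"
    by auto
  then have "rank p < card {q. q < d*g \<and> col q = col p}"
    unfolding rank_def by (rule psubset_card_mono[rotated]) simp
  then show ?thesis using card_colour_class[of "col p"] by simp
qed

lemma rank_less_rank:
  assumes "q < d*g" "col p = col q" "p < q"
  shows "rank p < rank q"
proof -
  let ?below = "\<lambda>p. {x. x < d*g \<and> col x = col p \<and> x < p}"
  have "?below p \<subseteq> ?below q" "p \<in> ?below q" using assms by auto
  then have "?below p \<subset> ?below q" by blast
  then show ?thesis unfolding rank_def by (rule psubset_card_mono[rotated]) simp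
qed

lemma rank_inj: "p < d*g \<Longrightarrow> q < d*g \<Longrightarrow> col p = col q \<Longrightarrow> rank p = rank q \<Longrightarrow> p = q"
  using rank_less_rank[of q p] rank_less_rank[of p q] by (metis linorder_neqE_nat less_irrefl)

lemma grp_relay: "p < d*g \<Longrightarrow> grp d (relay p) = col p mod g"
  unfolding relay_def grp_def using rank_less d_pos by simp

lemma relay_less: "p < d*g \<Longrightarrow> relay p < d*g"
proof -
  assume p: "p < d*g"
  have "relay p < (col p mod g + 1) * d" unfolding relay_def using rank_less[OF p] by simp
  also have "\<dots> \<le> g * d" using g_pos by (intro mult_right_mono) (simp_all add: Suc_le_eq)
  finally show ?thesis by (simp add: mult.commute)
qed

lemma batch_colour_eq:
  assumes "p \<in> batch r" "q \<in> batch r" "col p mod g = col q mod g"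
  shows "col p = col q"
proof -
  have "col p = col p div g * g + col p mod g" by simp
  also have "\<dots> = col q div g * g + col q mod g" using assms unfolding batch_def by simp
  finally show ?thesis by simp
qed

lemma inj_on_relay: "inj_on relay (batch r)"
proof (rule inj_onI)
  fix p q assume pq: "p \<in> batch r" "q \<in> batch r" "relay p = relay q"
  then have "p < d*g" "q < d*g" unfolding batch_def by auto
  then have "col p mod g = col q mod g" using grp_relay pq(3) by metis
  then have "col p = col q" using batch_colour_eq pq by blast
  moreover have "rank p = rank q" using pq(3) calculation unfolding relay_def by simp
  ultimately show "p = q" using rank_inj \<open>p < d*g\<close> \<open>q < d*g\<close> by blast
qed

lemma relayed_relay: "p \<in> batch r \<Longrightarrow> relayed r (relay p) = p"
  unfolding relayed_def by (rule inv_into_f_f[OF inj_on_relay])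

lemma relayed_in_batch: "j \<in> relay ` batch r \<Longrightarrow> relayed r j \<in> batch r"
  unfolding relayed_def by (rule inv_into_into)

lemma relay_relayed: "j \<in> relay ` batch r \<Longrightarrow> relay (relayed r j) = j"
  unfolding relayed_def by (rule f_inv_into_f)

lemma origin_destination: "p < d*g \<Longrightarrow> origin (\<pi> p) = p"
  unfolding origin_def using bij bij_betw_inv_into_left by fastforce

lemma valid_relay_slot:
  assumes "\<forall>i. i \<in> M i"
  shows "valid_slot d g M (relay_slot r)"
  unfolding valid_slot_def relay_slot_def prod.case
proof (intro conjI allI impI)
  show "(if j \<in> relay ` batch r then grp d (relayed r j) else 0) < g" for j
    using relayed_in_batch grp_less g_pos unfolding batch_def by auto
  fix i j assume "i < d*g" "j < d*g" "i \<noteq> j \<and> grp d i = grp d j"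
  then show "(if i \<in> batch r then {col i mod g} else {}) \<inter> (if j \<in> batch r then {col j mod g} else {}) = {}"
    using batch_colour_eq same_colour_source_group unfolding batch_def by auto
qed (use assms g_pos in auto)

lemma relay_slot_receives: "p \<in> batch r \<Longrightarrow> p \<in> step d g M (relay_slot r) (relay p)"
  unfolding relay_slot_def using relayed_relay grp_relay
  by (intro step_receives[where pk = "\<lambda>i. i", simplified]) (auto simp: batch_def)

lemma valid_delivery_slot:
  assumes "\<forall>p\<in>batch r. p \<in> M (relay p)"
  shows "valid_slot d g M (delivery_slot r)"
  unfolding valid_slot_def delivery_slot_def prod.case
proof (intro conjI allI impI)
  show "(if j \<in> relay ` batch r then {grp d (\<pi> (relayed r j))} else {}) \<subseteq> {..<g}" for j
    using relayed_in_batch grp_less bij_betw_apply[OF bij] unfolding batch_def by auto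
  show "relayed r j \<in> M j" if "(if j \<in> relay ` batch r then {grp d (\<pi> (relayed r j))} else {}) \<noteq> {}" for j
    using that assms relayed_in_batch relay_relayed by (metis empty_iff)
  fix i j assume ij: "i < d*g" "j < d*g" "i \<noteq> j \<and> grp d i = grp d j"
  show "(if i \<in> relay ` batch r then {grp d (\<pi> (relayed r i))} else {}) \<inter>
      (if j \<in> relay ` batch r then {grp d (\<pi> (relayed r j))} else {}) = {}"
  proof (cases "i \<in> relay ` batch r \<and> j \<in> relay ` batch r")
    case True
    then have "relayed r i \<noteq> relayed r j" using ij relay_relayed by metis
    moreover have "col (relayed r i) = col (relayed r j)"
      using True ij relayed_in_batch relay_relayed grp_relay batch_colour_eq
      unfolding batch_def by (metis (no_types, lifting) mem_Collect_eq)
    ultimately show ?thesis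
      using True relayed_in_batch same_colour_destination_group unfolding batch_def by auto
  qed auto
qed (use g_pos in auto)

lemma delivery_slot_receives:
  assumes "p \<in> batch r"
  shows "p \<in> step d g M (delivery_slot r) (\<pi> p)"
proof -
  have p: "p < d*g" using assms unfolding batch_def by simp
  have "relayed r (relay p) \<in> step d g M (delivery_slot r) (\<pi> p)"
    unfolding delivery_slot_def
    using relay_less[OF p] grp_relay[OF p] origin_destination[OF p] relayed_relay[OF assms] assms
    by (intro step_receives) auto
  then show ?thesis using relayed_relay[OF assms] by simp
qed

lemma round_routes_batch:
  assumes "\<forall>i. i \<in> M i"
  shows "valid_sched d g M [relay_slot r, delivery_slot r]"
    and "p \<in> batch r \<Longrightarrow> p \<in> run d g M [relay_slot r, delivery_slot r] (\<pi> p)"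
  using valid_relay_slot[OF assms] valid_delivery_slot relay_slot_receives delivery_slot_receives
  by auto

definition schedule :: "nat list \<Rightarrow> slot list" where
  "schedule rs = concat (map (\<lambda>r. [relay_slot r, delivery_slot r]) rs)"

lemma schedule_routes_batches:
  assumes "\<forall>i. i \<in> M i"
  shows "valid_sched d g M (schedule rs) \<and>
    (\<forall>r\<in>set rs. \<forall>p\<in>batch r. p \<in> run d g M (schedule rs) (\<pi> p))"
  using assms
proof (induction rs arbitrary: M)
  case (Cons r rs)
  define M' where "M' = run d g M [relay_slot r, delivery_slot r]"
  have "\<forall>i. i \<in> M' i" using Cons.prems run_mono unfolding M'_def by blast
  then have "valid_sched d g M' (schedule rs) \<and>
      (\<forall>r\<in>set rs. \<forall>p\<in>batch r. p \<in> run d g M' (schedule rs) (\<pi> p))"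
    by (rule Cons.IH)
  moreover have "p \<in> run d g M' (schedule rs) (\<pi> p)" if "p \<in> batch r" for p
    using round_routes_batch(2)[OF Cons.prems that] run_mono unfolding M'_def by blast
  ultimately show ?case
    using round_routes_batch(1)[OF Cons.prems] unfolding M'_def by (simp add: schedule_def)
qed (simp add: schedule_def)

theorem routable: "routable_in d g \<pi> (2 * k)"
proof -
  note sched = schedule_routes_batches[of "\<lambda>i. {i}" "[0..<k]"]
  have "p \<in> run d g (\<lambda>i. {i}) (schedule [0..<k]) (\<pi> p)" if "p < d*g" for p
  proof -
    have "p \<in> batch (col p div g)" "col p div g \<in> set [0..<k]"
      using that admissible unfolding batch_def admissible_colouring_def
      by (auto simp: less_mult_imp_div_less mult.commute)
    then show ?thesis using sched by simp
  qed
  moreover have "length (schedule [0..<k]) = 2 * k"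
    unfolding schedule_def by (induction k) auto
  ultimately show ?thesis
    unfolding routable_in_def using sched by blast
qed

end

lemma routable_in_one_slot:
  assumes bij: "bij_betw \<pi> {..<g} {..<g}"
  shows "routable_in 1 g \<pi> 1"
proof -
  define s :: slot where "s = ((\<lambda>i. i), (\<lambda>i. {\<pi> i}), inv_into {..<g} \<pi>)"
  have "valid_slot 1 g (\<lambda>i. {i}) s"
    unfolding valid_slot_def s_def grp_def
    using bij_betw_apply[OF bij] bij_betw_apply[OF bij_betw_inv_into[OF bij]] by auto
  moreover have "i \<in> step 1 g (\<lambda>i. {i}) s (\<pi> i)" if "i < g" for i
    unfolding s_def using that bij_betw_inv_into_left[OF bij]
    by (intro step_receives[where pk = "\<lambda>i. i", simplified]) (auto simp: grp_def)
  ultimately show ?thesis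
    unfolding routable_in_def by (intro exI[of _ "[s]"]) simp
qed

lemma le_mult_nat_ceiling_divide:
  assumes "0 < g"
  shows "d \<le> g * nat \<lceil>real d / real g\<rceil>"
proof -
  have "0 < real g" using assms by simp
  then have "real d \<le> real (nat \<lceil>real d / real g\<rceil>) * real g"
    using of_nat_ceiling[of "real d / real g"] pos_divide_le_eq by blast
  then have "d \<le> nat \<lceil>real d / real g\<rceil> * g"
    by (simp only: of_nat_mult[symmetric] of_nat_le_iff)
  then show ?thesis by (simp only: mult.commute)
qed

theorem theorem2:
  fixes d g :: nat and \<pi> :: "nat \<Rightarrow> nat"
  assumes "d \<ge> 1" and "g \<ge> 1"
    and "bij_betw \<pi> {..<d*g} {..<d*g}"
  shows "routable_in d g \<pi>
           (if d = 1 then 1 else 2 * nat \<lceil>real d / real g\<rceil>)"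
proof (cases "d = 1")
  case True
  then show ?thesis using routable_in_one_slot assms(3) by simp
next
  case False
  define k where "k = nat \<lceil>real d / real g\<rceil>"
  have "0 < d" "0 < k" "d \<le> g * k"
    using assms(1,2) le_mult_nat_ceiling_divide[of g d] unfolding k_def by auto
  then obtain col where "admissible_colouring d g \<pi> col (g * k)"
    using admissible_colouring_exists assms(3) by blast
  then interpret relay_routing d g k \<pi> col
    using assms by unfold_locales simp_all
  show ?thesis using routable False unfolding k_def by simp
qed

end
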